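(* Let $Z_1,\ldots,Z_{n+1}$ be i.i.d. from an arbitrary distribution $\mathcal P$, $V$ a fixed score function, $\alpha\in(0,1)$. Fix a finite grid $\mathcal G\subset[0,1]$ containing $0$ and $1$. For $a\in\mathcal G$ let $S(a)=\frac{1}{n+1}\sum_{i=1}^{n+1}\mathbb 1\{V_i\le Q(a;\hat{\mathcal F}_i)\}$. Let $\tilde\alpha_1=\min\{a\in\mathcal G:S(a)\ge\alpha\}$, $\tilde\alpha_2=\max\{a\in\mathcal G:S(a)<\alpha\}$, $\alpha_1=S(\tilde\alpha_1)$, $\alpha_2=S(\tilde\alpha_2)$, and let $\tilde\alpha=\tilde\alpha_1$ with probability $\frac{\alpha-\alpha_2}{\alpha_1-\alpha_2}$ and $\tilde\alpha=\tilde\alpha_2$ with probability $\frac{\alpha_1-\alpha}{\alpha_1-\alpha_2}$, using a randomization independent of the data. Then $\mathbb P\{V_{n+1}\le Q(\tilde\alpha;\hat{\mathcal F})\}=\alpha$.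
   Context: Data: $Z_i=(X_i,Y_i)\in\mathbb R^p\times\mathbb R$, $i=1,\ldots,n+1$; $X=\{X_1,\ldots,X_{n+1}\}$ (unordered). A localizer is a function $H(x_1,x_2,X)\in[0,1]$ of $x_1,x_2\in\mathbb R^p$ and of the unordered set $X$, satisfying $H(x,x,X)=1$ for all $x$. Write $H_{i,j}=H(X_i,X_j,X)$ and $p^H_{i,j}=H_{i,j}/\sum_{k=1}^{n+1}H_{i,k}$. For a probability distribution $\mathcal F$ on $\mathbb R\cup\{\infty\}$ and $a\in[0,1]$, $Q(a;\mathcal F)=\inf\{t:\mathbb P_{T\sim\mathcal F}(T\le t)\ge a\}$ (with $Q(0;\mathcal F)=-\infty$); $\delta_v$ denotes the point mass at $v$. A fixed score function is a deterministic measurable $V:\mathbb R^p\times\mathbb R\to[0,\infty)$ not depending on the data; $V_i=V(Z_i)$. Define $\hat{\mathcal F}_i=\sum_{j=1}^{n+1}p^H_{i,j}\delta_{V_j}$ for $i=1,\ldots,n+1$, and $\hat{\mathcal F}=\sum_{j=1}^{n}p^H_{n+1,j}\delta_{V_j}+p^H_{n+1,n+1}\delta_{\infty}$. *)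

theory Defs
  imports "HOL-Probability.Probability"
begin

text \<open>Data points are indexed 1..n+1; the point with index n+1 is the test point.
  A data sample is z :: nat => ('x * real), with z i = (X_i, Y_i).\<close>

definition Xms :: "nat \<Rightarrow> (nat \<Rightarrow> 'x \<times> real) \<Rightarrow> 'x multiset" where
  "Xms n z = image_mset (\<lambda>i. fst (z i)) (mset_set {1..n+1})"

definition Hmat :: "('x \<Rightarrow> 'x \<Rightarrow> 'x multiset \<Rightarrow> real) \<Rightarrow> nat \<Rightarrow> (nat \<Rightarrow> 'x \<times> real)
    \<Rightarrow> nat \<Rightarrow> nat \<Rightarrow> real" where
  "Hmat H n z i j = H (fst (z i)) (fst (z j)) (Xms n z)"

definition pH :: "('x \<Rightarrow> 'x \<Rightarrow> 'x multiset \<Rightarrow> real) \<Rightarrow> nat \<Rightarrow> (nat \<Rightarrow> 'x \<times> real)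
    \<Rightarrow> nat \<Rightarrow> nat \<Rightarrow> real" where
  "pH H n z i j = Hmat H n z i j / (\<Sum>k\<in>{1..n+1}. Hmat H n z i k)"

text \<open>For a = 0 every t qualifies, so the infimum is -infinity, matching Q(0;F) = -infinity.\<close>
definition wquantile :: "real \<Rightarrow> nat set \<Rightarrow> (nat \<Rightarrow> real) \<Rightarrow> (nat \<Rightarrow> ereal) \<Rightarrow> ereal" where
  "wquantile a J w v = Inf {t. a \<le> (\<Sum>j\<in>J. if v j \<le> t then w j else 0)}"

definition Fi_quant :: "('x \<Rightarrow> 'x \<Rightarrow> 'x multiset \<Rightarrow> real) \<Rightarrow> ('x \<times> real \<Rightarrow> real) \<Rightarrow> nat
    \<Rightarrow> (nat \<Rightarrow> 'x \<times> real) \<Rightarrow> nat \<Rightarrow> real \<Rightarrow> ereal" where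
  "Fi_quant H V n z i a = wquantile a {1..n+1} (pH H n z i) (\<lambda>j. ereal (V (z j)))"

definition Ftest_quant :: "('x \<Rightarrow> 'x \<Rightarrow> 'x multiset \<Rightarrow> real) \<Rightarrow> ('x \<times> real \<Rightarrow> real) \<Rightarrow> nat
    \<Rightarrow> (nat \<Rightarrow> 'x \<times> real) \<Rightarrow> real \<Rightarrow> ereal" where
  "Ftest_quant H V n z a = wquantile a {1..n+1} (pH H n z (n+1))
      (\<lambda>j. if j = n+1 then \<infinity> else ereal (V (z j)))"

definition Sfun :: "('x \<Rightarrow> 'x \<Rightarrow> 'x multiset \<Rightarrow> real) \<Rightarrow> ('x \<times> real \<Rightarrow> real) \<Rightarrow> nat
    \<Rightarrow> (nat \<Rightarrow> 'x \<times> real) \<Rightarrow> real \<Rightarrow> real" where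
  "Sfun H V n z a = (\<Sum>i\<in>{1..n+1}. if ereal (V (z i)) \<le> Fi_quant H V n z i a then 1 else 0)
      / real (n+1)"

definition alpha_t1 :: "real set \<Rightarrow> ('x \<Rightarrow> 'x \<Rightarrow> 'x multiset \<Rightarrow> real) \<Rightarrow> ('x \<times> real \<Rightarrow> real)
    \<Rightarrow> nat \<Rightarrow> real \<Rightarrow> (nat \<Rightarrow> 'x \<times> real) \<Rightarrow> real" where
  "alpha_t1 G H V n \<alpha> z = Min {a\<in>G. \<alpha> \<le> Sfun H V n z a}"

definition alpha_t2 :: "real set \<Rightarrow> ('x \<Rightarrow> 'x \<Rightarrow> 'x multiset \<Rightarrow> real) \<Rightarrow> ('x \<times> real \<Rightarrow> real)
    \<Rightarrow> nat \<Rightarrow> real \<Rightarrow> (nat \<Rightarrow> 'x \<times> real) \<Rightarrow> real" where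
  "alpha_t2 G H V n \<alpha> z = Max {a\<in>G. Sfun H V n z a < \<alpha>}"

text \<open>Randomized choice driven by an auxiliary u ~ Uniform[0,1] independent of the data:
  tilde alpha = tilde alpha_1 with probability (alpha - alpha_2)/(alpha_1 - alpha_2),
  and tilde alpha_2 otherwise.\<close>
definition alpha_tilde :: "real set \<Rightarrow> ('x \<Rightarrow> 'x \<Rightarrow> 'x multiset \<Rightarrow> real) \<Rightarrow> ('x \<times> real \<Rightarrow> real)
    \<Rightarrow> nat \<Rightarrow> real \<Rightarrow> (nat \<Rightarrow> 'x \<times> real) \<Rightarrow> real \<Rightarrow> real" where
  "alpha_tilde G H V n \<alpha> z u =
     (let a1 = alpha_t1 G H V n \<alpha> z; a2 = alpha_t2 G H V n \<alpha> z;
          s1 = Sfun H V n z a1; s2 = Sfun H V n z a2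
      in if u < (\<alpha> - s2) / (s1 - s2) then a1 else a2)"

end

theory Submission
  imports Defs
begin

text \<open>Let L_i be the mass that p^H_(i,\<cdot>) puts on scores strictly below V_i. Then
  V_i \<le> Q(a; F_i) iff L_i < a, and V_(n+1) \<le> Q(a; F) iff L_(n+1) < a (the atom at \<infinity> never
  lies below V_(n+1)), so S(a) is the fraction of indices with L_i < a. The data are i.i.d. and
  the randomized level A is a symmetric function of them, so swapping Z_i with Z_(n+1) shows
  P{L_(n+1) < A} = P{L_i < A} for every i; averaging over i, the coverage equals E[S(A)].
  Given the data, the randomization is chosen exactly so that S(A) has mean \<alpha>.\<close>

lemma ereal_gap_below_values:
  fixes v :: "'j \<Rightarrow> ereal" and b :: real
  assumes "finite J"
  obtains t where "t < ereal b" and "\<And>j. j \<in> J \<Longrightarrow> v j \<le> t \<longleftrightarrow> v j < ereal b"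
proof
  let ?T = "insert (-\<infinity>) {v j |j. j \<in> J \<and> v j < ereal b}"
  have T: "finite ?T" using assms by auto
  then show below: "Max ?T < ereal b"
    using Max_in[of ?T] by auto
  show "v j \<le> Max ?T \<longleftrightarrow> v j < ereal b" if "j \<in> J" for j
    using that T below by (auto intro: le_less_trans Max_ge)
qed

lemma wquantile_ge_iff:
  assumes J: "finite J" and w: "\<And>j. j \<in> J \<Longrightarrow> 0 \<le> w j"
  shows "ereal b \<le> wquantile a J w v \<longleftrightarrow> (\<Sum>j\<in>J. if v j < ereal b then w j else 0) < a"
proof
  assume b: "ereal b \<le> wquantile a J w v"
  obtain t where t: "t < ereal b" "\<And>j. j \<in> J \<Longrightarrow> v j \<le> t \<longleftrightarrow> v j < ereal b"
    using ereal_gap_below_values[OF J] by blast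
  show "(\<Sum>j\<in>J. if v j < ereal b then w j else 0) < a"
  proof (rule ccontr)
    assume "\<not> ?thesis"
    then have "a \<le> (\<Sum>j\<in>J. if v j \<le> t then w j else 0)"
      using t(2) by (simp cong: sum.cong)
    then have "wquantile a J w v \<le> t"
      unfolding wquantile_def by (intro Inf_lower) simp
    with b t(1) show False by simp
  qed
next
  assume mass: "(\<Sum>j\<in>J. if v j < ereal b then w j else 0) < a"
  show "ereal b \<le> wquantile a J w v"
    unfolding wquantile_def
  proof (rule Inf_greatest, clarify, rule ccontr)
    fix t assume "a \<le> (\<Sum>j\<in>J. if v j \<le> t then w j else 0)" and "\<not> ereal b \<le> t"
    moreover have "(\<Sum>j\<in>J. if v j \<le> t then w j else 0) \<le> (\<Sum>j\<in>J. if v j < ereal b then w j else 0)"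
      using \<open>\<not> ereal b \<le> t\<close> w by (intro sum_mono) auto
    ultimately show False using mass by linarith
  qed
qed

definition lower_mass :: "('x \<Rightarrow> 'x \<Rightarrow> 'x multiset \<Rightarrow> real) \<Rightarrow> ('x \<times> real \<Rightarrow> real)
    \<Rightarrow> nat \<Rightarrow> (nat \<Rightarrow> 'x \<times> real) \<Rightarrow> nat \<Rightarrow> real" where
  "lower_mass H V n z i = (\<Sum>j\<in>{1..n+1}. if V (z j) < V (z i) then pH H n z i j else 0)"

locale localizer =
  fixes H :: "'x \<Rightarrow> 'x \<Rightarrow> 'x multiset \<Rightarrow> real"
  assumes H_nonneg: "\<And>x1 x2 X. 0 \<le> H x1 x2 X"
    and H_diag: "\<And>x X. H x x X = 1"
begin

lemma pH_nonneg: "0 \<le> pH H n z i j"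
  unfolding pH_def Hmat_def by (intro divide_nonneg_nonneg sum_nonneg H_nonneg)

lemma Hmat_row_sum_ge_one:
  assumes "i \<in> {1..n+1}"
  shows "1 \<le> (\<Sum>k\<in>{1..n+1}. Hmat H n z i k)"
proof -
  have "Hmat H n z i i \<le> (\<Sum>k\<in>{1..n+1}. Hmat H n z i k)"
    using assms by (intro member_le_sum) (auto simp: Hmat_def H_nonneg)
  then show ?thesis by (simp add: Hmat_def H_diag)
qed

lemma sum_pH_eq_one:
  assumes "i \<in> {1..n+1}"
  shows "(\<Sum>j\<in>{1..n+1}. pH H n z i j) = 1"
  unfolding pH_def sum_divide_distrib[symmetric]
  using Hmat_row_sum_ge_one[OF assms, where z=z] by (intro divide_self) linarith

lemma lower_mass_nonneg: "0 \<le> lower_mass H V n z i"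
  unfolding lower_mass_def by (intro sum_nonneg) (simp add: pH_nonneg)

lemma lower_mass_less_one:
  assumes i: "i \<in> {1..n+1}"
  shows "lower_mass H V n z i < 1"
proof -
  have "0 < pH H n z i i"
    unfolding pH_def using Hmat_row_sum_ge_one[OF i, where z=z]
    by (intro divide_pos_pos) (auto simp: Hmat_def H_diag)
  then have "lower_mass H V n z i < (\<Sum>j\<in>{1..n+1}. pH H n z i j)"
    unfolding lower_mass_def using i
    by (intro sum_strict_mono_ex1) (auto simp: pH_nonneg intro!: bexI[of _ i])
  then show ?thesis unfolding sum_pH_eq_one[OF i] .
qed

lemma Fi_quant_ge_iff: "ereal (V (z i)) \<le> Fi_quant H V n z i a \<longleftrightarrow> lower_mass H V n z i < a"
  unfolding Fi_quant_def lower_mass_def by (subst wquantile_ge_iff) (auto simp: pH_nonneg)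

lemma Ftest_quant_ge_iff:
  "ereal (V (z (n+1))) \<le> Ftest_quant H V n z a \<longleftrightarrow> lower_mass H V n z (n+1) < a"
  unfolding Ftest_quant_def lower_mass_def
  by (subst wquantile_ge_iff) (auto simp: pH_nonneg intro!: sum.cong)

lemma Sfun_eq: "Sfun H V n z a = (\<Sum>i\<in>{1..n+1}. if lower_mass H V n z i < a then 1 else 0) / real (n+1)"
  unfolding Sfun_def Fi_quant_ge_iff ..

lemma Sfun_zero: "Sfun H V n z 0 = 0"
  unfolding Sfun_eq by (simp add: lower_mass_nonneg[THEN leD])

lemma Sfun_one: "Sfun H V n z 1 = 1"
  unfolding Sfun_eq by (simp add: lower_mass_less_one)

end

lemma Xms_reindex:
  assumes \<sigma>: "bij_betw \<sigma> {1..n+1} {1..n+1}" and z': "\<forall>j\<in>{1..n+1}. z' j = z (\<sigma> j)"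
  shows "Xms n z' = Xms n z"
proof -
  have "Xms n z' = image_mset (\<lambda>i. fst (z i)) (image_mset \<sigma> (mset_set {1..n+1}))"
    unfolding Xms_def multiset.map_comp o_def by (rule image_mset_cong) (simp add: z')
  also have "image_mset \<sigma> (mset_set {1..n+1}) = mset_set {1..n+1}"
    using \<sigma> by (simp add: image_mset_mset_set bij_betw_def)
  finally show ?thesis unfolding Xms_def .
qed

lemma lower_mass_reindex:
  assumes \<sigma>: "bij_betw \<sigma> {1..n+1} {1..n+1}" and z': "\<forall>j\<in>{1..n+1}. z' j = z (\<sigma> j)"
    and i: "i \<in> {1..n+1}"
  shows "lower_mass H V n z' i = lower_mass H V n z (\<sigma> i)"
proof -
  have Hmat: "Hmat H n z' i j = Hmat H n z (\<sigma> i) (\<sigma> j)" if "j \<in> {1..n+1}" for j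
    unfolding Hmat_def using Xms_reindex[OF \<sigma> z'] i that by (simp add: z')
  have "(\<Sum>k\<in>{1..n+1}. Hmat H n z' i k) = (\<Sum>k\<in>{1..n+1}. Hmat H n z (\<sigma> i) (\<sigma> k))"
    by (intro sum.cong) (simp_all add: Hmat)
  also have "\<dots> = (\<Sum>k\<in>{1..n+1}. Hmat H n z (\<sigma> i) k)"
    by (rule sum.reindex_bij_betw[OF \<sigma>])
  finally have "pH H n z' i j = pH H n z (\<sigma> i) (\<sigma> j)" if "j \<in> {1..n+1}" for j
    unfolding pH_def using that by (simp add: Hmat)
  then have "lower_mass H V n z' i
      = (\<Sum>j\<in>{1..n+1}. if V (z (\<sigma> j)) < V (z (\<sigma> i)) then pH H n z (\<sigma> i) (\<sigma> j) else 0)"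
    unfolding lower_mass_def using i by (intro sum.cong) (simp_all add: z')
  also have "\<dots> = lower_mass H V n z (\<sigma> i)"
    unfolding lower_mass_def by (rule sum.reindex_bij_betw[OF \<sigma>])
  finally show ?thesis .
qed

context localizer
begin

lemma Sfun_reindex:
  assumes \<sigma>: "bij_betw \<sigma> {1..n+1} {1..n+1}" and z': "\<forall>j\<in>{1..n+1}. z' j = z (\<sigma> j)"
  shows "Sfun H V n z' = Sfun H V n z"
proof
  fix a
  have "(\<Sum>i\<in>{1..n+1}. if lower_mass H V n z' i < a then 1 else 0 :: real)
      = (\<Sum>i\<in>{1..n+1}. if lower_mass H V n z (\<sigma> i) < a then 1 else 0)"
    by (intro sum.cong) (simp_all add: lower_mass_reindex[OF \<sigma> z'])
  also have "\<dots> = (\<Sum>i\<in>{1..n+1}. if lower_mass H V n z i < a then 1 else 0)"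
    by (rule sum.reindex_bij_betw[OF \<sigma>])
  finally show "Sfun H V n z' a = Sfun H V n z a"
    unfolding Sfun_eq by simp
qed

lemma alpha_tilde_reindex:
  assumes "bij_betw \<sigma> {1..n+1} {1..n+1}" and "\<forall>j\<in>{1..n+1}. z' j = z (\<sigma> j)"
  shows "alpha_tilde G H V n \<alpha> z' u = alpha_tilde G H V n \<alpha> z u"
  unfolding alpha_tilde_def alpha_t1_def alpha_t2_def Sfun_reindex[OF assms] ..

end

lemma distr_pair_PiM_reindex:
  fixes D :: "'a measure" and N :: "'b measure"
  assumes D: "prob_space D" and N: "sigma_finite_measure N" and \<sigma>: "bij_betw \<sigma> I I"
  shows "distr ((\<Pi>\<^sub>M i\<in>I. D) \<Otimes>\<^sub>M N) ((\<Pi>\<^sub>M i\<in>I. D) \<Otimes>\<^sub>M N)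
      (\<lambda>(\<omega>, u). (\<lambda>i\<in>I. \<omega> (\<sigma> i), u))
    = (\<Pi>\<^sub>M i\<in>I. D) \<Otimes>\<^sub>M N"
proof -
  let ?M = "\<Pi>\<^sub>M i\<in>I. D"
  have \<sigma>I: "\<sigma> \<in> I \<rightarrow> I" using \<sigma> by (auto simp: bij_betw_def)
  have reindex: "(\<lambda>\<omega>. \<lambda>i\<in>I. \<omega> (\<sigma> i)) \<in> measurable ?M ?M"
    using \<sigma>I by (intro measurable_restrict measurable_component_singleton) auto
  have "distr ?M ?M (\<lambda>\<omega>. \<lambda>i\<in>I. \<omega> (\<sigma> i)) = ?M"
    using distr_PiM_reindex[of I "\<lambda>_. D" \<sigma> I] D \<sigma>I bij_betw_imp_inj_on[OF \<sigma>] by simp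
  with pair_measure_distr[OF reindex measurable_ident_sets[OF refl, of N]] N
  show ?thesis by (simp add: split_beta')
qed

lemma measure_exchangeable_rank:
  fixes D :: "'a measure" and N :: "'b measure"
    and I :: "'i set" and L :: "('i \<Rightarrow> 'a) \<Rightarrow> 'i \<Rightarrow> real"
    and t :: "('i \<Rightarrow> 'a) \<times> 'b \<Rightarrow> real"
  defines "P \<equiv> (\<Pi>\<^sub>M i\<in>I. D) \<Otimes>\<^sub>M N"
  assumes D: "prob_space D" and N: "prob_space N" and I: "finite I" "k \<in> I"
    and L_meas: "\<And>i. i \<in> I \<Longrightarrow> (\<lambda>x. L (fst x) i) \<in> borel_measurable P"
    and t_meas: "t \<in> borel_measurable P"
    and L_reindex: "\<And>\<sigma> \<omega> i. bij_betw \<sigma> I I \<Longrightarrow> i \<in> I \<Longrightarrow>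
      L (\<lambda>j\<in>I. \<omega> (\<sigma> j)) i = L \<omega> (\<sigma> i)"
    and t_reindex: "\<And>\<sigma> \<omega> u. bij_betw \<sigma> I I \<Longrightarrow> t (\<lambda>j\<in>I. \<omega> (\<sigma> j), u) = t (\<omega>, u)"
  shows "measure P {x \<in> space P. L (fst x) k < t x}
    = (\<integral>x. (\<Sum>i\<in>I. if L (fst x) i < t x then 1 else 0) \<partial>P) / card I"
proof -
  interpret pair_prob_space "\<Pi>\<^sub>M i\<in>I. D" N
    using D N by (simp add: pair_prob_space_def pair_sigma_finite_def prob_space_PiM
        prob_space_imp_sigma_finite)
  define A where "A i = {x \<in> space P. L (fst x) i < t x}" for i
  have A_sets: "A i \<in> sets P" if "i \<in> I" for i
    unfolding A_def using L_meas[OF that] t_meas by measurable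
  have A_same: "measure P (A i) = measure P (A k)" if i: "i \<in> I" for i
  proof -
    \<comment> \<open>Transposing coordinates k and i preserves P and maps the event for i onto the one for k.\<close>
    define \<Phi> :: "('i \<Rightarrow> 'a) \<times> 'b \<Rightarrow> ('i \<Rightarrow> 'a) \<times> 'b"
      where "\<Phi> = (\<lambda>(\<omega>, u). (\<lambda>j\<in>I. \<omega> (Transposition.transpose k i j), u))"
    have \<sigma>: "bij_betw (Transposition.transpose k i) I I" using I i by simp
    have "(\<lambda>\<omega>. \<lambda>j\<in>I. \<omega> (Transposition.transpose k i j))
        \<in> measurable (\<Pi>\<^sub>M i\<in>I. D) (\<Pi>\<^sub>M i\<in>I. D)"
      using I i by (intro measurable_restrict measurable_component_singleton)
        (auto simp: Transposition.transpose_def)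
    then have \<Phi>: "\<Phi> \<in> measurable P P"
      unfolding \<Phi>_def P_def split_beta'
      by (rule measurable_Pair[OF measurable_compose[OF measurable_fst] measurable_snd])
    have "distr P P \<Phi> = P"
      unfolding \<Phi>_def P_def by (rule distr_pair_PiM_reindex[OF D prob_space_imp_sigma_finite[OF N] \<sigma>])
    then have "measure P (A k) = measure (distr P P \<Phi>) (A k)"
      by simp
    also have "\<dots> = measure P (\<Phi> -` A k \<inter> space P)"
      using \<Phi> A_sets[OF I(2)] by (rule measure_distr)
    also have "\<Phi> -` A k \<inter> space P = A i"
      using measurable_space[OF \<Phi>]
      by (auto simp: A_def \<Phi>_def L_reindex[OF \<sigma> I(2)] t_reindex[OF \<sigma>] split: prod.splits)
    finally show ?thesis by simp
  qed
  have "(\<integral>x. (\<Sum>i\<in>I. if L (fst x) i < t x then 1 else 0) \<partial>P) = (\<Sum>i\<in>I. measure P (A i))"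
  proof -
    have "(\<integral>x. (\<Sum>i\<in>I. if L (fst x) i < t x then 1 else 0) \<partial>P)
        = (\<integral>x. (\<Sum>i\<in>I. indicator (A i) x) \<partial>P)"
      by (intro Bochner_Integration.integral_cong sum.cong) (auto simp: A_def P_def indicator_def)
    also have "\<dots> = (\<Sum>i\<in>I. measure P (A i))"
      using A_sets by (subst Bochner_Integration.integral_sum)
        (auto simp: P_def emeasure_finite less_top[symmetric] intro!: integrable_real_indicator)
    finally show ?thesis .
  qed
  also have "\<dots> = card I * measure P (A k)"
    using A_same by simp
  finally show ?thesis
    using I by (auto simp: A_def)
qed

lemma integral_uniform_threshold:
  fixes c x y :: real
  assumes "0 \<le> c" "c \<le> 1"
  shows "(\<integral>u. (if u < c then x else y) \<partial>uniform_measure lborel {0..1}) = c * x + (1 - c) * y"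
proof -
  let ?U = "uniform_measure lborel {0..1::real}"
  interpret prob_space ?U by (rule prob_space_uniform_measure) simp_all
  have "measure ?U {..<c} = measure lborel ({0..1} \<inter> {..<c}) / measure lborel {0..1::real}"
    by (rule measure_uniform_measure) simp_all
  also have "{0..1} \<inter> {..<c} = {0..<c}" using assms by auto
  finally have c: "measure ?U {..<c} = c" using assms by simp
  have "(\<integral>u. (if u < c then x else y) \<partial>?U) = (\<integral>u. y + (x - y) * indicator {..<c} u \<partial>?U)"
    by (intro Bochner_Integration.integral_cong) (auto simp: indicator_def)
  also have "\<dots> = y + (x - y) * measure ?U {..<c}"
    using emeasure_finite[of "{..<c}"]
    by (subst Bochner_Integration.integral_add) (auto simp: less_top[symmetric] simp del: emeasure_uniform_measure)
  finally show ?thesis using c by (simp add: algebra_simps)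
qed

lemma borel_measurable_finite_valued:
  fixes f :: "'a \<Rightarrow> real"
  assumes G: "finite G" and f: "\<And>\<omega>. \<omega> \<in> space M \<Longrightarrow> f \<omega> \<in> G"
    and level: "\<And>x. x \<in> G \<Longrightarrow> {\<omega> \<in> space M. f \<omega> = x} \<in> sets M"
  shows "f \<in> borel_measurable M"
proof (rule borel_measurable_simple_function, unfold simple_function_def, intro conjI ballI)
  show "finite (f ` space M)"
    using G f by (auto intro: finite_subset)
  fix x
  show "f -` {x} \<inter> space M \<in> sets M"
  proof (cases "x \<in> G")
    case True
    then show ?thesis using level[of x] by (simp add: vimage_def Int_def conj_commute)
  next
    case False
    then have "f -` {x} \<inter> space M = {}" using f by auto
    then show ?thesis by simp
  qed
qed

lemma measurable_lower_mass:
  assumes V: "V \<in> borel_measurable D"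
    and Hmat: "\<And>i j. i \<in> {1..n+1} \<Longrightarrow> j \<in> {1..n+1} \<Longrightarrow>
      (\<lambda>z. Hmat H n z i j) \<in> borel_measurable (\<Pi>\<^sub>M i\<in>{1..n+1}. D)"
    and i: "i \<in> {1..n+1}"
  shows "(\<lambda>z. lower_mass H V n z i) \<in> borel_measurable (\<Pi>\<^sub>M i\<in>{1..n+1}. D)"
  unfolding lower_mass_def pH_def
proof (intro borel_measurable_sum)
  fix j assume j: "j \<in> {1..n+1}"
  note [measurable] = V Hmat[OF i] measurable_component_singleton[OF i] measurable_component_singleton[OF j]
  have "(\<lambda>z. \<Sum>k\<in>{1..n+1}. Hmat H n z i k) \<in> borel_measurable (\<Pi>\<^sub>M i\<in>{1..n+1}. D)"
    by (intro borel_measurable_sum Hmat[OF i])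
  with j show "(\<lambda>z. if V (z j) < V (z i) then Hmat H n z i j / (\<Sum>k\<in>{1..n+1}. Hmat H n z i k) else 0)
      \<in> borel_measurable (\<Pi>\<^sub>M i\<in>{1..n+1}. D)"
    by measurable
qed

lemma abs_Sfun_le_one: "\<bar>Sfun H V n z a\<bar> \<le> 1"
proof -
  have "(\<Sum>i\<in>{1..n+1}. if ereal (V (z i)) \<le> Fi_quant H V n z i a then 1 else 0 :: real) \<le> real (card {1..n+1}) * 1"
    by (intro sum_bounded_above) simp
  then show ?thesis
    unfolding Sfun_def by (simp add: sum_nonneg)
qed

locale calibration_grid = localizer H for H :: "'x \<Rightarrow> 'x \<Rightarrow> 'x multiset \<Rightarrow> real" +
  fixes G :: "real set" and \<alpha> :: real
  assumes finite_G: "finite G" and zero_in_G: "0 \<in> G" and one_in_G: "1 \<in> G"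
    and alpha_pos: "0 < \<alpha>" and alpha_less_one: "\<alpha> < 1"
begin

lemma alpha_t1_eq_iff:
  "alpha_t1 G H V n \<alpha> z = a \<longleftrightarrow>
    a \<in> G \<and> \<alpha> \<le> Sfun H V n z a \<and> (\<forall>b\<in>G. \<alpha> \<le> Sfun H V n z b \<longrightarrow> a \<le> b)"
proof -
  have "1 \<in> {a\<in>G. \<alpha> \<le> Sfun H V n z a}"
    using one_in_G alpha_less_one by (simp add: Sfun_one)
  then show ?thesis
    unfolding alpha_t1_def using finite_G by (subst Min_eq_iff) auto
qed

lemma alpha_t2_eq_iff:
  "alpha_t2 G H V n \<alpha> z = a \<longleftrightarrow>
    a \<in> G \<and> Sfun H V n z a < \<alpha> \<and> (\<forall>b\<in>G. Sfun H V n z b < \<alpha> \<longrightarrow> b \<le> a)"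
proof -
  have "0 \<in> {a\<in>G. Sfun H V n z a < \<alpha>}"
    using zero_in_G alpha_pos by (simp add: Sfun_zero)
  then show ?thesis
    unfolding alpha_t2_def using finite_G by (subst Max_eq_iff) auto
qed

lemma alpha_t1_in_G: "alpha_t1 G H V n \<alpha> z \<in> G"
  and Sfun_alpha_t1_ge: "\<alpha> \<le> Sfun H V n z (alpha_t1 G H V n \<alpha> z)"
  using alpha_t1_eq_iff by blast+

lemma alpha_t2_in_G: "alpha_t2 G H V n \<alpha> z \<in> G"
  and Sfun_alpha_t2_less: "Sfun H V n z (alpha_t2 G H V n \<alpha> z) < \<alpha>"
  using alpha_t2_eq_iff by blast+

lemma integral_Sfun_alpha_tilde:
  "(\<integral>u. Sfun H V n z (alpha_tilde G H V n \<alpha> z u) \<partial>uniform_measure lborel {0..1}) = \<alpha>"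
proof -
  define s1 where "s1 = Sfun H V n z (alpha_t1 G H V n \<alpha> z)"
  define s2 where "s2 = Sfun H V n z (alpha_t2 G H V n \<alpha> z)"
  define c where "c = (\<alpha> - s2) / (s1 - s2)"
  have s: "\<alpha> \<le> s1" "s2 < \<alpha>"
    unfolding s1_def s2_def by (rule Sfun_alpha_t1_ge Sfun_alpha_t2_less)+
  then have c: "0 \<le> c" "c \<le> 1"
    unfolding c_def by (simp_all add: field_simps)
  have "c * s1 + (1 - c) * s2 = s2 + c * (s1 - s2)"
    by (simp add: algebra_simps)
  also have "c * (s1 - s2) = \<alpha> - s2"
    unfolding c_def using s by simp
  finally have mix: "c * s1 + (1 - c) * s2 = \<alpha>" by simp
  have "Sfun H V n z (alpha_tilde G H V n \<alpha> z u) = (if u < c then s1 else s2)" for u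
    unfolding alpha_tilde_def Let_def s1_def s2_def c_def by simp
  then show ?thesis
    using integral_uniform_threshold[OF c] mix by simp
qed

lemma integral_pair_Sfun_alpha_tilde:
  fixes M :: "(nat \<Rightarrow> 'x \<times> real) measure"
  assumes M: "prob_space M"
    and S: "(\<lambda>x. Sfun H V n (fst x) (alpha_tilde G H V n \<alpha> (fst x) (snd x)))
      \<in> borel_measurable (M \<Otimes>\<^sub>M uniform_measure lborel {0..1})"
  shows "(\<integral>x. Sfun H V n (fst x) (alpha_tilde G H V n \<alpha> (fst x) (snd x))
      \<partial>(M \<Otimes>\<^sub>M uniform_measure lborel {0..1})) = \<alpha>"
proof -
  let ?U = "uniform_measure lborel {0..1::real}"
  interpret pair_prob_space M ?U
    using M prob_space_uniform_measure[of lborel "{0..1::real}"]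
    by (simp add: pair_prob_space_def pair_sigma_finite_def prob_space_imp_sigma_finite)
  have "integrable (M \<Otimes>\<^sub>M ?U) (\<lambda>x. Sfun H V n (fst x) (alpha_tilde G H V n \<alpha> (fst x) (snd x)))"
    using S by (intro integrable_const_bound[where B=1]) (simp_all add: abs_Sfun_le_one)
  then have "(\<integral>x. Sfun H V n (fst x) (alpha_tilde G H V n \<alpha> (fst x) (snd x)) \<partial>(M \<Otimes>\<^sub>M ?U))
      = (\<integral>z. (\<integral>u. Sfun H V n z (alpha_tilde G H V n \<alpha> z u) \<partial>?U) \<partial>M)"
    by (subst integral_fst'[symmetric]) simp_all
  also have "\<dots> = \<alpha>"
    by (simp add: integral_Sfun_alpha_tilde M1.prob_space)
  finally show ?thesis .
qed

lemma measurable_Sfun: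
  assumes V: "V \<in> borel_measurable D"
    and Hmat: "\<And>i j. i \<in> {1..n+1} \<Longrightarrow> j \<in> {1..n+1} \<Longrightarrow>
      (\<lambda>z. Hmat H n z i j) \<in> borel_measurable (\<Pi>\<^sub>M i\<in>{1..n+1}. D)"
  shows "(\<lambda>x. Sfun H V n (fst x) (snd x)) \<in> borel_measurable ((\<Pi>\<^sub>M i\<in>{1..n+1}. D) \<Otimes>\<^sub>M borel)"
  unfolding Sfun_eq
proof (intro borel_measurable_divide borel_measurable_sum)
  fix i assume "i \<in> {1..n+1}"
  note [measurable] = measurable_lower_mass[OF V Hmat this]
  show "(\<lambda>x. if lower_mass H V n (fst x) i < snd x then 1 else 0 :: real)
      \<in> borel_measurable ((\<Pi>\<^sub>M i\<in>{1..n+1}. D) \<Otimes>\<^sub>M borel)"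
    by measurable
qed simp

lemma measurable_alpha_tilde:
  assumes V: "V \<in> borel_measurable D"
    and Hmat: "\<And>i j. i \<in> {1..n+1} \<Longrightarrow> j \<in> {1..n+1} \<Longrightarrow>
      (\<lambda>z. Hmat H n z i j) \<in> borel_measurable (\<Pi>\<^sub>M i\<in>{1..n+1}. D)"
    and N: "sets N = sets borel"
  shows "(\<lambda>x. alpha_tilde G H V n \<alpha> (fst x) (snd x))
    \<in> borel_measurable ((\<Pi>\<^sub>M i\<in>{1..n+1}. D) \<Otimes>\<^sub>M N)"
proof -
  let ?M = "\<Pi>\<^sub>M i\<in>{1..n+1}. D"
  note S[measurable] = measurable_Sfun[OF V Hmat]
  have Sfun_at: "(\<lambda>z. Sfun H V n z (f z)) \<in> borel_measurable ?M" if "f \<in> borel_measurable ?M" for f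
    using measurable_compose[OF measurable_Pair[OF measurable_ident that] S] by simp
  note [measurable] = Sfun_at[OF measurable_const]
  have [measurable]: "(\<lambda>z. alpha_t1 G H V n \<alpha> z) \<in> borel_measurable ?M"
    by (rule borel_measurable_finite_valued[OF finite_G alpha_t1_in_G])
      (use finite_G in \<open>unfold alpha_t1_eq_iff, measurable\<close>)
  have [measurable]: "(\<lambda>z. alpha_t2 G H V n \<alpha> z) \<in> borel_measurable ?M"
    by (rule borel_measurable_finite_valued[OF finite_G alpha_t2_in_G])
      (use finite_G in \<open>unfold alpha_t2_eq_iff, measurable\<close>)
  note [measurable] = Sfun_at[of "alpha_t1 G H V n \<alpha>"] Sfun_at[of "alpha_t2 G H V n \<alpha>"]
  have "(\<lambda>x. alpha_tilde G H V n \<alpha> (fst x) (snd x)) \<in> borel_measurable (?M \<Otimes>\<^sub>M borel)"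
    unfolding alpha_tilde_def Let_def by measurable
  then show ?thesis
    by (simp add: measurable_cong_sets[OF sets_pair_measure_cong[OF refl N] refl])
qed

end

theorem corollary3:
  fixes D :: "((real^('p::finite)) \<times> real) measure"
    and V :: "(real^('p::finite)) \<times> real \<Rightarrow> real"
    and H :: "real^('p::finite) \<Rightarrow> real^'p \<Rightarrow> (real^'p) multiset \<Rightarrow> real"
    and n :: nat and \<alpha> :: real and G :: "real set"
  assumes "prob_space D" and "sets D = sets borel"
    and "\<forall>z. 0 \<le> V z" and "V \<in> borel_measurable borel"
    and "\<forall>x1 x2 X. 0 \<le> H x1 x2 X \<and> H x1 x2 X \<le> 1"
    and "\<forall>x X. H x x X = 1"
    and "\<forall>i\<in>{1..n+1}. \<forall>j\<in>{1..n+1}.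
           (\<lambda>z. Hmat H n z i j) \<in> borel_measurable (\<Pi>\<^sub>M i\<in>{1..n+1}. D)"
    and "0 < \<alpha>" and "\<alpha> < 1"
    and "finite G" and "G \<subseteq> {0..1}" and "0 \<in> G" and "1 \<in> G"
  shows "measure ((\<Pi>\<^sub>M i\<in>{1..n+1}. D) \<Otimes>\<^sub>M uniform_measure lborel {0..1::real})
           {(z, u) \<in> space ((\<Pi>\<^sub>M i\<in>{1..n+1}. D) \<Otimes>\<^sub>M uniform_measure lborel {0..1::real}).
              ereal (V (z (n+1))) \<le> Ftest_quant H V n z (alpha_tilde G H V n \<alpha> z u)}
         = \<alpha>"
proof -
  interpret calibration_grid H G \<alpha>
    using assms by unfold_locales auto
  let ?M = "\<Pi>\<^sub>M i\<in>{1..n+1}. D" and ?U = "uniform_measure lborel {0..1::real}"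
  let ?t = "\<lambda>x. alpha_tilde G H V n \<alpha> (fst x) (snd x)"
  have U: "prob_space ?U" by (rule prob_space_uniform_measure) simp_all
  have V: "V \<in> borel_measurable D"
    using assms(2,4) by (simp cong: measurable_cong_sets)
  note Hmat = assms(7)[rule_format]
  have t: "?t \<in> borel_measurable (?M \<Otimes>\<^sub>M ?U)"
    by (rule measurable_alpha_tilde[OF V Hmat]) simp_all
  have L: "(\<lambda>x. lower_mass H V n (fst x) i) \<in> borel_measurable (?M \<Otimes>\<^sub>M ?U)" if "i \<in> {1..n+1}" for i
    using measurable_lower_mass[OF V Hmat that] by measurable
  have "measure (?M \<Otimes>\<^sub>M ?U) {(z, u) \<in> space (?M \<Otimes>\<^sub>M ?U).
          ereal (V (z (n+1))) \<le> Ftest_quant H V n z (alpha_tilde G H V n \<alpha> z u)}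
      = measure (?M \<Otimes>\<^sub>M ?U) {x \<in> space (?M \<Otimes>\<^sub>M ?U). lower_mass H V n (fst x) (n+1) < ?t x}"
    by (simp only: Ftest_quant_ge_iff case_prod_beta' prod.collapse)
  also have "\<dots> = (\<integral>x. (\<Sum>i\<in>{1..n+1}. if lower_mass H V n (fst x) i < ?t x then 1 else 0)
      \<partial>(?M \<Otimes>\<^sub>M ?U)) / card {1..n+1}"
    by (rule measure_exchangeable_rank[OF assms(1) U _ _ L t])
      (auto intro: lower_mass_reindex alpha_tilde_reindex)
  also have "\<dots> = (\<integral>x. Sfun H V n (fst x) (?t x) \<partial>(?M \<Otimes>\<^sub>M ?U))"
    by (simp add: Sfun_eq)
  also have "\<dots> = \<alpha>"
  proof (rule integral_pair_Sfun_alpha_tilde[OF assms(1)[THEN prob_space_PiM]])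
    have "(\<lambda>x. (fst x, ?t x)) \<in> measurable (?M \<Otimes>\<^sub>M ?U) (?M \<Otimes>\<^sub>M borel)"
      using t by measurable
    from measurable_compose[OF this measurable_Sfun[OF V Hmat]]
    show "(\<lambda>x. Sfun H V n (fst x) (?t x)) \<in> borel_measurable (?M \<Otimes>\<^sub>M ?U)" by simp
  qed
  finally show ?thesis .
qed

end
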